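(* There exist ten IGL environments $E_0,\dots,E_9$ with the following properties. All share the same context space $\mathcal X$, context distribution $d_0$, action set $\mathcal A=\{0,\dots,9\}$ and reward: there is a labeling $\ell:\mathcal X\to\{0,\dots,9\}$ with $\Pr_{x\sim d_0}[\ell(x)=j]=1/10$ for each $j$, and $r=\mathbf 1\{a=\ell(x)\}$. The feedback space is a disjoint union $\mathcal Y=\mathcal Y_0\sqcup\dots\sqcup\mathcal Y_9$ with a probability distribution $\nu_j$ on each $\mathcal Y_j$; in environment $E_i$, $y\mid r=1\sim\nu_i$ and $y\mid r=0\sim\frac19\sum_{j\ne i}\nu_j$, independently of $(x,a)$. Then: (i) each $E_i$ satisfies Assumption 1, and, with $\Pi$ the class of all policies, $\pi_u$ the uniform policy and any decoder class $\Psi$ containing the indicators $\mathbf 1_{\mathcal Y_0},\dots,\mathbf 1_{\mathcal Y_9}$, Assumption 2 holds (e.g. with $\eta=0.8$); (ii) when actions are chosen by $\pi_u$, the marginal distribution of $y$ is the same ($\frac1{10}\sum_j\nu_j$) in all ten environments; (iii) for every decoder $\psi:\mathcal Y\to[0,1]$ (the same decoder being used in all environments, as any method depending only on the marginal law of $y$ must do), there exists $i\in\{0,\dots,9\}$ and a policy $\hat\pi$ that maximizes the decoded reward $V_i(\pi,\psi)$ over all policies in environment $E_i$ and satisfies $V_i(\hat\pi)=0$, while $\max_\pi V_i(\pi)=1$; hence $V_i(\pi^\star)-V_i(\hat\pi)=\Omega(1)$.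
   Context: IGL setting: contexts $x\sim d_0$, finite action set, latent reward $r\in\{0,1\}$ and feedback $y$ drawn given $(x,a)$; for environment $E_i$, $V_i(\pi)=\mathbb E_{x\sim d_0,a\sim\pi(\cdot|x)}[r]$ and $V_i(\pi,\psi)=\mathbb E_{x\sim d_0,a\sim\pi(\cdot|x)}[\psi(y)]$ computed in $E_i$. Assumption 1 (conditional independence): there are distributions $Q_0,Q_1$ on $\mathcal Y$ with $y\mid(x,a,r)\sim Q_r$; $\Delta\psi:=\mathbb E_{Q_1}[\psi]-\mathbb E_{Q_0}[\psi]$. Assumption 2 (identifiability): with $\pi^\star\in\arg\max_{\pi\in\Pi}V(\pi)$ and $\psi^\star\in\arg\max_{\psi\in\Psi}\Delta\psi$, there is $\eta>0$ with $(V(\pi^\star)-V(\pi_u))\Delta\psi^\star\ge V(\pi_u)+\eta$, where $\pi_u$ is the uniform policy. *)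

theory Defs
  imports "HOL-Probability.Probability"
begin

text \<open>IGL with action set A = {0..<10} (actions are naturals below 10).
  An environment is given by a context distribution d0, a reward function
  rew x a (deterministic, 0/1-valued) and a feedback kernel K x a, the law of y
  given (x,a).\<close>

definition policy :: "'x measure \<Rightarrow> ('x \<Rightarrow> nat \<Rightarrow> real) \<Rightarrow> bool" where
  "policy d0 p \<longleftrightarrow> (\<forall>a. (\<lambda>x. p x a) \<in> borel_measurable d0)
      \<and> (\<forall>x a. 0 \<le> p x a) \<and> (\<forall>x. (\<Sum>a<10. p x a) = 1)"

definition unif_policy :: "'x \<Rightarrow> nat \<Rightarrow> real" where
  "unif_policy x a = 1 / 10"

definition Vr :: "'x measure \<Rightarrow> ('x \<Rightarrow> nat \<Rightarrow> real) \<Rightarrow> ('x \<Rightarrow> nat \<Rightarrow> real) \<Rightarrow> real" where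
  "Vr d0 rew p = (\<integral>x. (\<Sum>a<10. p x a * rew x a) \<partial>d0)"

definition Vdec :: "'x measure \<Rightarrow> ('x \<Rightarrow> nat \<Rightarrow> 'y measure) \<Rightarrow> ('x \<Rightarrow> nat \<Rightarrow> real)
                    \<Rightarrow> ('y \<Rightarrow> real) \<Rightarrow> real" where
  "Vdec d0 K p psi = (\<integral>x. (\<Sum>a<10. p x a * (\<integral>y. psi y \<partial>(K x a))) \<partial>d0)"

definition marg_y :: "'x measure \<Rightarrow> ('x \<Rightarrow> nat \<Rightarrow> 'y measure) \<Rightarrow> ('x \<Rightarrow> nat \<Rightarrow> real)
                    \<Rightarrow> 'y set \<Rightarrow> real" where
  "marg_y d0 K p A = (\<integral>x. (\<Sum>a<10. p x a * measure (K x a) A) \<partial>d0)"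

definition decoder :: "'y measure \<Rightarrow> ('y \<Rightarrow> real) \<Rightarrow> bool" where
  "decoder Y psi \<longleftrightarrow> psi \<in> borel_measurable Y \<and> (\<forall>y. 0 \<le> psi y \<and> psi y \<le> 1)"

definition Delta :: "'y measure \<Rightarrow> 'y measure \<Rightarrow> ('y \<Rightarrow> real) \<Rightarrow> real" where
  "Delta Q0 Q1 psi = (\<integral>y. psi y \<partial>Q1) - (\<integral>y. psi y \<partial>Q0)"

text \<open>Assumption 1 (conditional independence) with witnesses Q0, Q1:
  y | (x,a,r) ~ Q_r.  Since r = rew x a is deterministic given (x,a),
  this says the law of y given (x,a) is Q_{rew x a}.\<close>
definition assumption1 :: "'x measure \<Rightarrow> 'y measure \<Rightarrow> ('x \<Rightarrow> nat \<Rightarrow> real)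
      \<Rightarrow> ('x \<Rightarrow> nat \<Rightarrow> 'y measure) \<Rightarrow> 'y measure \<Rightarrow> 'y measure \<Rightarrow> bool" where
  "assumption1 d0 Y rew K Q0 Q1 \<longleftrightarrow>
     prob_space Q0 \<and> prob_space Q1 \<and> sets Q0 = sets Y \<and> sets Q1 = sets Y \<and>
     (\<forall>x\<in>space d0. \<forall>a<10. K x a = (if rew x a = 1 then Q1 else Q0))"

definition assumption2 :: "'x measure \<Rightarrow> ('x \<Rightarrow> nat \<Rightarrow> real) \<Rightarrow> 'y measure \<Rightarrow> 'y measure
      \<Rightarrow> ('x \<Rightarrow> nat \<Rightarrow> real) set \<Rightarrow> ('y \<Rightarrow> real) set \<Rightarrow> real \<Rightarrow> bool" where
  "assumption2 d0 rew Q0 Q1 PP Psi eta \<longleftrightarrow> eta > 0 \<and>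
     (\<exists>pistar\<in>PP. \<exists>psistar\<in>Psi.
        (\<forall>p\<in>PP. Vr d0 rew p \<le> Vr d0 rew pistar) \<and>
        (\<forall>psi\<in>Psi. Delta Q0 Q1 psi \<le> Delta Q0 Q1 psistar) \<and>
        (Vr d0 rew pistar - Vr d0 rew unif_policy) * Delta Q0 Q1 psistar
           \<ge> Vr d0 rew unif_policy + eta)"

definition lab_rew :: "('x \<Rightarrow> nat) \<Rightarrow> 'x \<Rightarrow> nat \<Rightarrow> real" where
  "lab_rew l x a = (if a = l x then 1 else 0)"

definition mixQ0 :: "'y measure \<Rightarrow> (nat \<Rightarrow> 'y measure) \<Rightarrow> nat \<Rightarrow> 'y measure" where
  "mixQ0 Y nu i = measure_of (space Y) (sets Y)
      (\<lambda>A. (\<Sum>j\<in>{0..<10} - {i}. emeasure (nu j) A) / 9)"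

definition envK :: "('x \<Rightarrow> nat) \<Rightarrow> 'y measure \<Rightarrow> (nat \<Rightarrow> 'y measure) \<Rightarrow> nat
      \<Rightarrow> 'x \<Rightarrow> nat \<Rightarrow> 'y measure" where
  "envK l Y nu i x a = (if lab_rew l x a = 1 then nu i else mixQ0 Y nu i)"

end

(*
  In environment E_i the feedback given r = 0 is the uniform mixture of the nu_j with j ~= i.
  Under the uniform policy y is therefore distributed as
  (1/10) nu_i + (9/10) (1/9) (sum of nu_j, j ~= i) = (1/10) (sum of all nu_j), whatever i is.
  The indicator of Y_i separates Q_1 = nu_i from Q_0 perfectly, so Delta = 1, and
  (1 - 1/10) * 1 = 1/10 + 4/5 gives Assumption 2.
  A fixed decoder psi has some mean c_j under nu_j.  In the environment i minimising c_j, every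
  wrong action is decoded to the average of the c_j, j ~= i, which is at least c_i.  So the policy
  that never plays the label maximises the decoded reward there, yet its true reward is 0.
*)

theory Submission
  imports Defs
begin

definition uniform_mixture :: "'a measure \<Rightarrow> ('i \<Rightarrow> 'a measure) \<Rightarrow> 'i set \<Rightarrow> 'a measure" where
  "uniform_mixture M N I =
     measure_of (space M) (sets M) (\<lambda>A. (\<Sum>j\<in>I. emeasure (N j) A) / of_nat (card I))"

lemma sets_uniform_mixture [simp, measurable_cong]: "sets (uniform_mixture M N I) = sets M"
  and space_uniform_mixture [simp]: "space (uniform_mixture M N I) = space M"
  unfolding uniform_mixture_def by (simp_all add: sets.space_closed)

lemma emeasure_uniform_mixture:
  assumes sets_N: "\<And>j. j \<in> I \<Longrightarrow> sets (N j) = sets M" and A: "A \<in> sets M"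
  shows "emeasure (uniform_mixture M N I) A = (\<Sum>j\<in>I. emeasure (N j) A) / of_nat (card I)"
  unfolding uniform_mixture_def
proof (rule emeasure_measure_of_sigma[OF sets.sigma_algebra_axioms _ _ A])
  show "positive (sets M) (\<lambda>A. (\<Sum>j\<in>I. emeasure (N j) A) / of_nat (card I))"
    by (simp add: positive_def)
  show "countably_additive (sets M) (\<lambda>A. (\<Sum>j\<in>I. emeasure (N j) A) / of_nat (card I))"
    unfolding countably_additive_def
  proof (intro allI impI)
    fix F :: "nat \<Rightarrow> _"
    assume F: "range F \<subseteq> sets M" "disjoint_family F" "\<Union> (range F) \<in> sets M"
    have "(\<Sum>n. \<Sum>j\<in>I. emeasure (N j) (F n)) = (\<Sum>j\<in>I. \<Sum>n. emeasure (N j) (F n))"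
      by (rule suminf_sum) (rule summableI)
    also have "\<dots> = (\<Sum>j\<in>I. emeasure (N j) (\<Union> (range F)))"
      using F sets_N by (intro sum.cong refl suminf_emeasure) auto
    finally show "(\<Sum>n. (\<Sum>j\<in>I. emeasure (N j) (F n)) / of_nat (card I))
        = (\<Sum>j\<in>I. emeasure (N j) (\<Union> (range F))) / of_nat (card I)"
      by (simp add: divide_ennreal_def)
  qed
qed

lemma nn_integral_uniform_mixture:
  assumes sets_N: "\<And>j. j \<in> I \<Longrightarrow> sets (N j) = sets M" and f: "f \<in> borel_measurable M"
  shows "(\<integral>\<^sup>+ y. f y \<partial>uniform_mixture M N I) = (\<Sum>j\<in>I. \<integral>\<^sup>+ y. f y \<partial>N j) / of_nat (card I)"
  using f
proof (induction rule: borel_measurable_induct)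
  case (cong f g)
  have "\<And>j. j \<in> I \<Longrightarrow> (\<integral>\<^sup>+ y. f y \<partial>N j) = (\<integral>\<^sup>+ y. g y \<partial>N j)"
    using cong(3) sets_N sets_eq_imp_space_eq by (metis nn_integral_cong)
  moreover have "(\<integral>\<^sup>+ y. f y \<partial>uniform_mixture M N I) = (\<integral>\<^sup>+ y. g y \<partial>uniform_mixture M N I)"
    using cong(3) by (intro nn_integral_cong) simp
  ultimately show ?case using cong(4) by simp
next
  case (set A)
  then show ?case using sets_N by (simp add: emeasure_uniform_mixture[OF sets_N])
next
  case (mult u c)
  have "\<And>j. j \<in> I \<Longrightarrow> (\<integral>\<^sup>+ y. c * u y \<partial>N j) = c * (\<integral>\<^sup>+ y. u y \<partial>N j)"
    using mult(2) sets_N by (intro nn_integral_cmult) (simp add: measurable_cong_sets[OF sets_N refl])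
  moreover have "(\<integral>\<^sup>+ y. c * u y \<partial>uniform_mixture M N I) = c * (\<integral>\<^sup>+ y. u y \<partial>uniform_mixture M N I)"
    using mult(2) by (intro nn_integral_cmult) simp
  ultimately show ?case
    using mult.IH by (simp add: sum_distrib_left ennreal_times_divide)
next
  case (add u v)
  have "\<And>j. j \<in> I \<Longrightarrow> (\<integral>\<^sup>+ y. v y + u y \<partial>N j) = (\<integral>\<^sup>+ y. v y \<partial>N j) + (\<integral>\<^sup>+ y. u y \<partial>N j)"
    using add sets_N by (intro nn_integral_add) (simp_all add: measurable_cong_sets[OF sets_N refl])
  moreover have "(\<integral>\<^sup>+ y. v y + u y \<partial>uniform_mixture M N I)
      = (\<integral>\<^sup>+ y. v y \<partial>uniform_mixture M N I) + (\<integral>\<^sup>+ y. u y \<partial>uniform_mixture M N I)"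
    using add by (intro nn_integral_add) simp_all
  ultimately show ?case
    using add.IH by (simp add: sum.distrib divide_ennreal_def distrib_right)
next
  case (seq U)
  have meas_mix: "\<And>k. U k \<in> borel_measurable (uniform_mixture M N I)"
    using seq(1) by (simp add: measurable_cong_sets[OF sets_uniform_mixture refl])
  have meas_N: "\<And>k j. j \<in> I \<Longrightarrow> U k \<in> borel_measurable (N j)"
    using seq(1) by (simp add: measurable_cong_sets[OF sets_N refl])
  have inc: "\<And>j. j \<in> I \<Longrightarrow> incseq (\<lambda>k. \<integral>\<^sup>+ y. U k y \<partial>N j)"
    using seq(3) by (auto simp: incseq_def le_fun_def intro!: nn_integral_mono)
  have "(\<integral>\<^sup>+ y. (SUP k. U k) y \<partial>uniform_mixture M N I) = (SUP k. \<integral>\<^sup>+ y. U k y \<partial>uniform_mixture M N I)"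
    unfolding SUP_apply by (rule nn_integral_monotone_convergence_SUP[OF seq(3) meas_mix])
  also have "\<dots> = (SUP k. \<Sum>j\<in>I. \<integral>\<^sup>+ y. U k y \<partial>N j) / of_nat (card I)"
    using seq.IH by (simp add: SUP_divide_ennreal)
  also have "\<dots> = (\<Sum>j\<in>I. SUP k. \<integral>\<^sup>+ y. U k y \<partial>N j) / of_nat (card I)"
    by (simp add: ennreal_SUP_sum[OF inc])
  also have "\<dots> = (\<Sum>j\<in>I. \<integral>\<^sup>+ y. (SUP k. U k) y \<partial>N j) / of_nat (card I)"
    unfolding SUP_apply using seq(3) meas_N by (simp add: nn_integral_monotone_convergence_SUP)
  finally show ?case .
qed

lemma ennreal_divide_of_nat: "0 \<le> x \<Longrightarrow> 0 < n \<Longrightarrow> ennreal x / of_nat n = ennreal (x / real n)"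
  by (simp add: ennreal_of_nat_eq_real_of_nat divide_ennreal)

lemma prob_space_uniform_mixture:
  assumes "finite I" "I \<noteq> {}"
    and prob_N: "\<And>j. j \<in> I \<Longrightarrow> prob_space (N j)" and sets_N: "\<And>j. j \<in> I \<Longrightarrow> sets (N j) = sets M"
  shows "prob_space (uniform_mixture M N I)"
proof (rule prob_spaceI)
  have "\<And>j. j \<in> I \<Longrightarrow> emeasure (N j) (space M) = 1"
    using prob_N sets_N by (metis prob_space.emeasure_space_1 sets_eq_imp_space_eq)
  then show "emeasure (uniform_mixture M N I) (space (uniform_mixture M N I)) = 1"
    using assms by (simp add: emeasure_uniform_mixture[OF sets_N] ennreal_of_nat_eq_real_of_nat divide_ennreal)
qed

lemma measure_uniform_mixture:
  assumes "finite I" "I \<noteq> {}"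
    and prob_N: "\<And>j. j \<in> I \<Longrightarrow> prob_space (N j)" and sets_N: "\<And>j. j \<in> I \<Longrightarrow> sets (N j) = sets M"
    and A: "A \<in> sets M"
  shows "measure (uniform_mixture M N I) A = (\<Sum>j\<in>I. measure (N j) A) / card I"
proof -
  have "\<And>j. j \<in> I \<Longrightarrow> emeasure (N j) A = ennreal (measure (N j) A)"
    using prob_N by (metis prob_space_def finite_measure.emeasure_eq_measure)
  then have "emeasure (uniform_mixture M N I) A = ennreal ((\<Sum>j\<in>I. measure (N j) A) / card I)"
    using assms by (simp add: emeasure_uniform_mixture[OF sets_N A] sum_nonneg ennreal_divide_of_nat card_gt_0_iff)
  then show ?thesis
    by (simp add: measure_def sum_nonneg)
qed

lemma integral_uniform_mixture:
  assumes "finite I" "I \<noteq> {}" and sets_N: "\<And>j. j \<in> I \<Longrightarrow> sets (N j) = sets M"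
    and f: "f \<in> borel_measurable M" "\<And>y. 0 \<le> f y" and integrable_N: "\<And>j. j \<in> I \<Longrightarrow> integrable (N j) f"
  shows "(\<integral>y. f y \<partial>uniform_mixture M N I) = (\<Sum>j\<in>I. \<integral>y. f y \<partial>N j) / card I"
proof -
  have "\<And>j. j \<in> I \<Longrightarrow> (\<integral>\<^sup>+ y. f y \<partial>N j) = ennreal (\<integral>y. f y \<partial>N j)"
    using integrable_N f(2) by (simp add: nn_integral_eq_integral)
  then have "(\<integral>\<^sup>+ y. f y \<partial>uniform_mixture M N I) = ennreal ((\<Sum>j\<in>I. \<integral>y. f y \<partial>N j) / card I)"
    using assms by (simp add: nn_integral_uniform_mixture[OF sets_N] sum_nonneg ennreal_divide_of_nat card_gt_0_iff)
  moreover have "f \<in> borel_measurable (uniform_mixture M N I)"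
    using f(1) by (simp add: measurable_cong_sets[OF sets_uniform_mixture refl])
  ultimately show ?thesis
    using f(2) by (simp add: integral_eq_nn_integral sum_nonneg)
qed

lemma (in prob_space) prob_eq_0_if_disjoint_prob_1:
  assumes "A \<in> events" "B \<in> events" "A \<inter> B = {}" "prob B = 1"
  shows "prob A = 0"
proof -
  have "prob A + prob B = prob (A \<union> B)"
    using assms by (simp add: finite_measure_Union)
  also have "\<dots> \<le> 1" by simp
  finally show ?thesis using assms(4) measure_nonneg[of M A] by linarith
qed

lemma integrable_decoder:
  assumes "prob_space N" "sets N = sets Y" "decoder Y psi"
  shows "integrable N psi"
proof -
  interpret prob_space N by fact
  show ?thesis
    using assms(2,3) by (intro integrable_const_bound[where B=1])
      (auto simp: decoder_def measurable_cong_sets[OF assms(2) refl])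
qed

lemma integral_decoder_nonneg: "decoder Y psi \<Longrightarrow> 0 \<le> (\<integral>y. psi y \<partial>N)"
  by (simp add: decoder_def)

lemma integral_decoder_le_1:
  assumes "prob_space N" "sets N = sets Y" "decoder Y psi"
  shows "(\<integral>y. psi y \<partial>N) \<le> 1"
proof -
  interpret prob_space N by fact
  show ?thesis
    using assms integrable_decoder by (intro integral_le_const) (auto simp: decoder_def)
qed

lemma Delta_decoder_le_1:
  assumes "prob_space Q1" "sets Q1 = sets Y" "decoder Y psi"
  shows "Delta Q0 Q1 psi \<le> 1"
  using integral_decoder_le_1[OF assms] integral_decoder_nonneg[OF assms(3), of Q0]
  by (simp add: Delta_def)

lemma Suc_mod_10_neq [simp]: "Suc n mod 10 \<noteq> (n :: nat)"
  by presburger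

lemma sum_lessThan_if_eq:
  assumes "k < n"
  shows "(\<Sum>a<n. if a = k then u else v) = u + of_nat (n - 1) * (v :: real)"
  using assms by (simp add: sum.remove)

definition deterministic_policy :: "('x \<Rightarrow> nat) \<Rightarrow> 'x \<Rightarrow> nat \<Rightarrow> real" where
  "deterministic_policy f x a = (if a = f x then 1 else 0)"

lemma sum_deterministic_policy:
  assumes "f x < 10"
  shows "(\<Sum>a<10. deterministic_policy f x a * g a) = g (f x)"
proof -
  have "(\<Sum>a<10. deterministic_policy f x a * g a) = (\<Sum>a<10. if a = f x then g a else 0)"
    by (intro sum.cong) (auto simp: deterministic_policy_def)
  then show ?thesis using assms by (simp add: sum.delta')
qed

lemma policy_deterministic_policy:
  assumes "f \<in> measurable d0 (count_space UNIV)" "\<And>x. f x < 10"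
  shows "policy d0 (deterministic_policy f)"
  unfolding policy_def
proof (intro conjI allI)
  fix a
  have "(\<lambda>x. (\<lambda>n. if a = n then 1 else 0 :: real) (f x)) \<in> borel_measurable d0"
    by (rule measurable_compose[OF assms(1)]) simp
  then show "(\<lambda>x. deterministic_policy f x a) \<in> borel_measurable d0"
    by (simp add: deterministic_policy_def eq_commute)
qed (use assms(2) in \<open>auto simp: deterministic_policy_def sum.delta'\<close>)

lemma (in prob_space) integral_eq_const_on_space:
  assumes "\<And>x. x \<in> space M \<Longrightarrow> f x = (c :: real)"
  shows "(\<integral>x. f x \<partial>M) = c"
proof -
  have "(\<integral>x. f x \<partial>M) = (\<integral>x. c \<partial>M)"
    using assms by (intro Bochner_Integration.integral_cong) auto
  then show ?thesis by (simp add: prob_space)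
qed

lemma integral_deterministic_policy:
  assumes "prob_space d0" "\<And>x. f x < 10" "\<And>x. x \<in> space d0 \<Longrightarrow> g x (f x) = c"
  shows "(\<integral>x. (\<Sum>a<10. deterministic_policy f x a * g x a) \<partial>d0) = c"
  using assms by (intro prob_space.integral_eq_const_on_space) (simp_all add: sum_deterministic_policy)

lemma integral_policy_le:
  assumes "prob_space d0" "policy d0 p" "\<And>x a. g x a \<le> \<beta>" "0 \<le> \<beta>"
  shows "(\<integral>x. (\<Sum>a<10. p x a * g x a) \<partial>d0) \<le> \<beta>"
proof -
  interpret prob_space d0 by fact
  have pointwise: "(\<Sum>a<10. p x a * g x a) \<le> \<beta>" for x
  proof -
    have "(\<Sum>a<10. p x a * g x a) \<le> (\<Sum>a<10. p x a * \<beta>)"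
      using assms(2,3) unfolding policy_def by (intro sum_mono mult_left_mono) auto
    also have "\<dots> = \<beta>"
      using assms(2) unfolding policy_def by (simp add: sum_distrib_right[symmetric])
    finally show ?thesis .
  qed
  show ?thesis
  proof (cases "integrable d0 (\<lambda>x. \<Sum>a<10. p x a * g x a)")
    case True
    then show ?thesis using pointwise by (intro integral_le_const) auto
  next
    case False
    then show ?thesis using assms(4) by (simp add: not_integrable_integral_eq)
  qed
qed

locale ten_environments =
  fixes d0 :: "'x measure" and l :: "'x \<Rightarrow> nat"
    and Y :: "'y measure" and Yp :: "nat \<Rightarrow> 'y set" and nu :: "nat \<Rightarrow> 'y measure"
  assumes d0: "prob_space d0"
    and l_meas: "l \<in> measurable d0 (count_space UNIV)"
    and l_range: "\<forall>x\<in>space d0. l x < 10"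
    and Yp_sets: "\<forall>j<10. Yp j \<in> sets Y"
    and Yp_disj: "disjoint_family_on Yp {0..<10}"
    and nu_prob: "\<forall>j<10. prob_space (nu j)"
    and nu_sets: "\<forall>j<10. sets (nu j) = sets Y"
    and nu_on: "\<forall>j<10. emeasure (nu j) (Yp j) = 1"
begin

(* l x < 10 is only known on the sample space, but a policy must be a distribution at every x. *)

abbreviation optimal_policy :: "'x \<Rightarrow> nat \<Rightarrow> real" where
  "optimal_policy \<equiv> deterministic_policy (\<lambda>x. l x mod 10)"

abbreviation wrong_policy :: "'x \<Rightarrow> nat \<Rightarrow> real" where
  "wrong_policy \<equiv> deterministic_policy (\<lambda>x. Suc (l x) mod 10)"

lemma policy_optimal_policy: "policy d0 optimal_policy"
  and policy_wrong_policy: "policy d0 wrong_policy"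
  by (auto intro!: policy_deterministic_policy measurable_compose[OF l_meas])

lemma Vr_le_1: "policy d0 p \<Longrightarrow> Vr d0 (lab_rew l) p \<le> 1"
  unfolding Vr_def by (rule integral_policy_le[OF d0]) (auto simp: lab_rew_def)

lemma Vr_optimal_policy: "Vr d0 (lab_rew l) optimal_policy = 1"
  unfolding Vr_def using l_range by (intro integral_deterministic_policy[OF d0]) (auto simp: lab_rew_def)

lemma Vr_wrong_policy: "Vr d0 (lab_rew l) wrong_policy = 0"
  unfolding Vr_def by (intro integral_deterministic_policy[OF d0]) (auto simp: lab_rew_def)

lemma Vr_unif_policy: "Vr d0 (lab_rew l) unif_policy = 1 / 10"
proof -
  have "(\<Sum>a<10. unif_policy x a * lab_rew l x a) = 1 / 10" if "x \<in> space d0" for x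
    using l_range that by (simp add: unif_policy_def lab_rew_def sum_divide_distrib[symmetric] sum.delta')
  then show ?thesis
    unfolding Vr_def by (rule prob_space.integral_eq_const_on_space[OF d0])
qed

lemma envK_eq: "envK l Y nu i x a = (if a = l x then nu i else mixQ0 Y nu i)"
  by (simp add: envK_def lab_rew_def)

lemma mixQ0_eq_uniform_mixture:
  assumes "i < 10"
  shows "mixQ0 Y nu i = uniform_mixture Y nu ({0..<10} - {i})"
  using assms by (simp add: mixQ0_def uniform_mixture_def)

lemma other_indices:
  fixes i :: nat
  assumes "i < 10"
  shows "finite ({0..<10} - {i})" and "card ({0..<10} - {i}) = 9" and "{0..<10} - {i} \<noteq> {}"
proof -
  show "card ({0..<10} - {i}) = 9" using assms by simp
  then show "{0..<10} - {i} \<noteq> {}" by (metis card.empty zero_neq_numeral)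
qed simp

lemma prob_space_mixQ0:
  assumes "i < 10"
  shows "prob_space (mixQ0 Y nu i)"
  unfolding mixQ0_eq_uniform_mixture[OF assms]
  using other_indices[OF assms] nu_prob nu_sets by (intro prob_space_uniform_mixture) auto

lemma measure_mixQ0:
  assumes "i < 10" "A \<in> sets Y"
  shows "measure (mixQ0 Y nu i) A = (\<Sum>j\<in>{0..<10} - {i}. measure (nu j) A) / 9"
  unfolding mixQ0_eq_uniform_mixture[OF assms(1)]
  using other_indices[OF assms(1)] nu_prob nu_sets assms(2) by (subst measure_uniform_mixture) auto

lemma integral_mixQ0:
  assumes "i < 10" "decoder Y psi"
  shows "(\<integral>y. psi y \<partial>mixQ0 Y nu i) = (\<Sum>j\<in>{0..<10} - {i}. \<integral>y. psi y \<partial>nu j) / 9"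
  unfolding mixQ0_eq_uniform_mixture[OF assms(1)]
  using other_indices[OF assms(1)] nu_prob nu_sets assms(2)
  by (subst integral_uniform_mixture) (auto simp: decoder_def intro: integrable_decoder)

lemma prob_nu_other_block:
  assumes "i < 10" "j < 10" "i \<noteq> j"
  shows "measure (nu j) (Yp i) = 0"
proof -
  interpret prob_space "nu j" using nu_prob assms(2) by simp
  show ?thesis
  proof (rule prob_eq_0_if_disjoint_prob_1)
    show "Yp i \<in> events" "Yp j \<in> events" using Yp_sets nu_sets assms by auto
    show "Yp i \<inter> Yp j = {}" using Yp_disj assms by (auto simp: disjoint_family_on_def)
    show "prob (Yp j) = 1" using nu_on assms(2) by (simp add: measure_def)
  qed
qed

lemma assumption1_env: "i < 10 \<Longrightarrow> assumption1 d0 Y (lab_rew l) (envK l Y nu i) (mixQ0 Y nu i) (nu i)"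
  using prob_space_mixQ0 nu_prob nu_sets
  by (auto simp: assumption1_def envK_eq lab_rew_def mixQ0_eq_uniform_mixture)

lemma Delta_indicator_own_block:
  assumes "i < 10"
  shows "Delta (mixQ0 Y nu i) (nu i) (indicator (Yp i)) = 1"
proof -
  have block: "Yp i \<subseteq> space Y" using Yp_sets assms sets.sets_into_space by blast
  have "measure (nu i) (Yp i) = 1" using nu_on assms by (simp add: measure_def)
  moreover have "measure (mixQ0 Y nu i) (Yp i) = 0"
    using assms Yp_sets prob_nu_other_block by (simp add: measure_mixQ0)
  moreover have "space (nu i) = space Y" using nu_sets assms sets_eq_imp_space_eq by blast
  ultimately show ?thesis
    using assms block by (simp add: Delta_def mixQ0_eq_uniform_mixture Int_absorb2)
qed

lemma assumption2_env:
  assumes "i < 10" "\<forall>j<10. indicator (Yp j) \<in> Psi" "\<forall>psi\<in>Psi. decoder Y psi"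
  shows "assumption2 d0 (lab_rew l) (mixQ0 Y nu i) (nu i) {p. policy d0 p} Psi (4/5)"
  unfolding assumption2_def
proof (intro conjI bexI[of _ optimal_policy] bexI[of _ "indicator (Yp i)"])
  show "\<forall>p\<in>{p. policy d0 p}. Vr d0 (lab_rew l) p \<le> Vr d0 (lab_rew l) optimal_policy"
    using Vr_le_1 by (simp add: Vr_optimal_policy)
  show "\<forall>psi\<in>Psi. Delta (mixQ0 Y nu i) (nu i) psi \<le> Delta (mixQ0 Y nu i) (nu i) (indicator (Yp i))"
    using assms nu_prob nu_sets by (simp add: Delta_decoder_le_1 Delta_indicator_own_block)
  show "Vr d0 (lab_rew l) unif_policy + 4 / 5
      \<le> (Vr d0 (lab_rew l) optimal_policy - Vr d0 (lab_rew l) unif_policy) * Delta (mixQ0 Y nu i) (nu i) (indicator (Yp i))"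
    using assms by (simp add: Vr_optimal_policy Vr_unif_policy Delta_indicator_own_block)
qed (use assms policy_optimal_policy in auto)

lemma marginal_unif_policy:
  assumes "i < 10" "A \<in> sets Y"
  shows "marg_y d0 (envK l Y nu i) unif_policy A = (\<Sum>j<10. measure (nu j) A) / 10"
proof -
  have total: "(\<Sum>j<10. measure (nu j) A) = measure (nu i) A + 9 * measure (mixQ0 Y nu i) A"
    using assms by (simp add: measure_mixQ0 sum.remove atLeast0LessThan)
  have "(\<Sum>a<10. unif_policy x a * measure (envK l Y nu i x a) A) = (\<Sum>j<10. measure (nu j) A) / 10"
    if "x \<in> space d0" for x
  proof -
    have "(\<Sum>a<10. measure (envK l Y nu i x a) A)
        = (\<Sum>a<10. if a = l x then measure (nu i) A else measure (mixQ0 Y nu i) A)"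
      by (intro sum.cong) (simp_all add: envK_eq)
    also have "\<dots> = measure (nu i) A + 9 * measure (mixQ0 Y nu i) A"
      using l_range that by (simp add: sum_lessThan_if_eq)
    finally have "(\<Sum>a<10. measure (envK l Y nu i x a) A) = measure (nu i) A + 9 * measure (mixQ0 Y nu i) A" .
    then show ?thesis
      by (simp add: unif_policy_def total sum_divide_distrib[symmetric])
  qed
  then show ?thesis
    unfolding marg_y_def by (rule prob_space.integral_eq_const_on_space[OF d0])
qed

lemma decoder_fooled:
  assumes "decoder Y psi"
  shows "\<exists>i<10. \<forall>p. policy d0 p \<longrightarrow> Vdec d0 (envK l Y nu i) p psi \<le> Vdec d0 (envK l Y nu i) wrong_policy psi"
proof -
  define c where "c j = (\<integral>y. psi y \<partial>nu j)" for j
  obtain i where i: "i < 10" "\<And>j. j < 10 \<Longrightarrow> c i \<le> c j"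
  proof -
    have "Min (c ` {..<10}) \<in> c ` {..<10}" by (intro Min_in) (simp_all add: lessThan_empty_iff)
    then obtain i where "i < 10" "c i = Min (c ` {..<10})" by auto
    then show thesis by (intro that) auto
  qed
  define m where "m = (\<integral>y. psi y \<partial>mixQ0 Y nu i)"
  have "of_nat 9 * c i \<le> (\<Sum>j\<in>{0..<10} - {i}. c j)"
    using sum_bounded_below[of "{0..<10} - {i}" "c i" c] i other_indices(2)[OF i(1)] by simp
  then have c_le_m: "c i \<le> m"
    unfolding m_def using integral_mixQ0[OF i(1) assms] by (simp add: c_def)
  have m_nonneg: "0 \<le> m"
    unfolding m_def using assms by (rule integral_decoder_nonneg)
  have inner: "(\<integral>y. psi y \<partial>envK l Y nu i x a) = (if a = l x then c i else m)" for x a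
    by (simp add: envK_eq c_def m_def)
  have "Vdec d0 (envK l Y nu i) wrong_policy psi = m"
    unfolding Vdec_def inner by (rule integral_deterministic_policy[OF d0]) auto
  moreover have "Vdec d0 (envK l Y nu i) p psi \<le> m" if "policy d0 p" for p
    unfolding Vdec_def inner using c_le_m m_nonneg by (intro integral_policy_le[OF d0 that]) auto
  ultimately show ?thesis using i(1) by auto
qed

end

theorem theorem3:
  fixes d0 :: "'x measure" and l :: "'x \<Rightarrow> nat"
    and Y :: "'y measure" and Yp :: "nat \<Rightarrow> 'y set" and nu :: "nat \<Rightarrow> 'y measure"
  assumes d0: "prob_space d0"
    and l_meas: "l \<in> measurable d0 (count_space UNIV)"
    and l_range: "\<forall>x\<in>space d0. l x < 10"
    and l_unif: "\<forall>j<10. measure d0 {x\<in>space d0. l x = j} = 1 / 10"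
    and Yp_sets: "\<forall>j<10. Yp j \<in> sets Y"
    and Yp_disj: "disjoint_family_on Yp {0..<10}"
    and Yp_cover: "(\<Union>j<10. Yp j) = space Y"
    and nu_prob: "\<forall>j<10. prob_space (nu j)"
    and nu_sets: "\<forall>j<10. sets (nu j) = sets Y"
    and nu_on: "\<forall>j<10. emeasure (nu j) (Yp j) = 1"
  shows
    \<comment> \<open>(i) Assumptions 1 and 2 (with eta = 0.8) for every environment\<close>
    "(\<forall>i<10. \<exists>Q0 Q1. assumption1 d0 Y (lab_rew l) (envK l Y nu i) Q0 Q1 \<and>
        (\<forall>Psi. (\<forall>j<10. indicator (Yp j) \<in> Psi) \<and> (\<forall>psi\<in>Psi. decoder Y psi) \<longrightarrow>
            assumption2 d0 (lab_rew l) Q0 Q1 {p. policy d0 p} Psi (4/5)))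
     \<and>
    \<comment> \<open>(ii) the marginal law of y under the uniform policy is (1/10) sum_j nu_j in every environment\<close>
     (\<forall>i<10. \<forall>A\<in>sets Y.
        marg_y d0 (envK l Y nu i) unif_policy A = (\<Sum>j<10. measure (nu j) A) / 10)
     \<and>
    \<comment> \<open>(iii) for every decoder some environment is fooled\<close>
     (\<forall>psi. decoder Y psi \<longrightarrow>
        (\<exists>i<10. \<exists>pihat. policy d0 pihat \<and>
           (\<forall>p. policy d0 p \<longrightarrow> Vdec d0 (envK l Y nu i) p psi \<le> Vdec d0 (envK l Y nu i) pihat psi) \<and>
           Vr d0 (lab_rew l) pihat = 0 \<and>
           (\<exists>pistar. policy d0 pistar \<and> Vr d0 (lab_rew l) pistar = 1 \<and>
              (\<forall>p. policy d0 p \<longrightarrow> Vr d0 (lab_rew l) p \<le> 1))))"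
proof -
  interpret ten_environments d0 l Y Yp nu
    using d0 l_meas l_range Yp_sets Yp_disj nu_prob nu_sets nu_on by (simp add: ten_environments_def)
  show ?thesis
    using policy_wrong_policy Vr_wrong_policy policy_optimal_policy Vr_optimal_policy Vr_le_1
    by (intro conjI allI impI ballI)
      (blast intro: assumption1_env assumption2_env marginal_unif_policy dest: decoder_fooled)+
qed

end
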